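(* Every Markov shift $X$ is Borel isomorphic to a Borel system of the form $W\sqcup\bigsqcup_{n\in\mathbb N}\Sigma(L_n)$, where $W$ is weakly wandering (an invariant Borel subsystem consisting of a weakly wandering set) and each $L_n$ is a loop graph, $\Sigma(L_n)$ denoting the corresponding Markov shift.
   Context: A Markov shift $\Sigma(G)$ is the left shift on the set of bi-infinite edge paths in a directed graph $G$ with countably (possibly finitely) many vertices and edges, with the product of discrete topologies; it is a Borel system (standard Borel space with a Borel automorphism). A Borel isomorphism of Borel systems is a Borel bijection with Borel inverse intertwining the actions. In a Borel system $(X,T)$, a Borel set $W$ is wandering if the sets $T^kW$, $k\in\mathbb Z$, are pairwise disjoint; a set is weakly wandering if it is a Borel subset of a countable union of wandering sets. A loop graph is a directed graph consisting of simple loops all based at a common vertex and otherwise pairwise non-intersecting; the associated Markov shift is a loop system. *)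

theory Defs
  imports "HOL-Analysis.Analysis" "Graph_Theory.Digraph"
begin

text \<open>Directed graphs with countably (possibly finitely) many vertices and edges:
  vertices and edges are labelled by natural numbers; multiple edges and loops allowed.\<close>
type_synonym graph = "(nat, nat) pre_digraph"

definition markov_shift :: "graph \<Rightarrow> (int \<Rightarrow> nat) set" where
  "markov_shift G = {x. \<forall>i. x i \<in> arcs G \<and> head G (x i) = tail G (x (i + 1))}"

definition shift :: "(int \<Rightarrow> nat) \<Rightarrow> (int \<Rightarrow> nat)" where
  "shift x = (\<lambda>i. x (i + 1))"

definition shift_pow :: "int \<Rightarrow> (int \<Rightarrow> nat) \<Rightarrow> (int \<Rightarrow> nat)" where
  "shift_pow k x = (\<lambda>i. x (i + k))"

text \<open>Borel structure: Borel sets of the product of discrete topologies (the topology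
  on int => nat is the product topology, nat carries the discrete topology),
  restricted to the given subset.\<close>
definition borel_on :: "(int \<Rightarrow> nat) set \<Rightarrow> (int \<Rightarrow> nat) measure" where
  "borel_on S = restrict_space borel S"

definition wandering :: "graph \<Rightarrow> (int \<Rightarrow> nat) set \<Rightarrow> bool" where
  "wandering G A \<longleftrightarrow> A \<in> sets (borel_on (markov_shift G)) \<and>
     (\<forall>k l. k \<noteq> l \<longrightarrow> shift_pow k ` A \<inter> shift_pow l ` A = {})"

definition weakly_wandering :: "graph \<Rightarrow> (int \<Rightarrow> nat) set \<Rightarrow> bool" where
  "weakly_wandering G A \<longleftrightarrow> A \<in> sets (borel_on (markov_shift G)) \<and>
     (\<exists>Ws :: nat \<Rightarrow> (int \<Rightarrow> nat) set. (\<forall>k. wandering G (Ws k)) \<and> A \<subseteq> (\<Union>k. Ws k))"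

definition borel_iso :: "(int \<Rightarrow> nat) set \<Rightarrow> (int \<Rightarrow> nat) set \<Rightarrow> bool" where
  "borel_iso S S' \<longleftrightarrow> (\<exists>f g.
     bij_betw f S S' \<and>
     f \<in> borel_on S \<rightarrow>\<^sub>M borel_on S' \<and>
     g \<in> borel_on S' \<rightarrow>\<^sub>M borel_on S \<and>
     (\<forall>x\<in>S. g (f x) = x) \<and> (\<forall>y\<in>S'. f (g y) = y) \<and>
     (\<forall>x\<in>S. f (shift x) = shift (f x)))"

definition inner_verts :: "graph \<Rightarrow> nat list \<Rightarrow> nat list" where
  "inner_verts G c = map (head G) (butlast c)"

definition is_simple_loop :: "graph \<Rightarrow> nat \<Rightarrow> nat list \<Rightarrow> bool" where
  "is_simple_loop G v c \<longleftrightarrow> c \<noteq> [] \<and> set c \<subseteq> arcs G \<and>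
     tail G (hd c) = v \<and> head G (last c) = v \<and>
     (\<forall>i. Suc i < length c \<longrightarrow> head G (c ! i) = tail G (c ! Suc i)) \<and>
     distinct (inner_verts G c) \<and> v \<notin> set (inner_verts G c)"

definition loop_graph :: "graph \<Rightarrow> bool" where
  "loop_graph G \<longleftrightarrow> wf_digraph G \<and> (\<exists>v C. v \<in> verts G \<and>
     (\<forall>c\<in>C. is_simple_loop G v c) \<and>
     arcs G = (\<Union>c\<in>C. set c) \<and>
     verts G = insert v (\<Union>c\<in>C. set (inner_verts G c)) \<and>
     (\<forall>c\<in>C. \<forall>d\<in>C. c \<noteq> d \<longrightarrow>
        set c \<inter> set d = {} \<and> set (inner_verts G c) \<inter> set (inner_verts G d) = {}))"

end

theory Submission
  imports Defs
begin

text \<open>Let \<open>n\<close> be the least vertex visited by a point \<open>x\<close> of the shift. If \<open>x\<close> visits \<open>n\<close>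
  infinitely often in both directions, cutting \<open>x\<close> at these visits writes it as a bi-infinite
  concatenation of first-return loops at \<open>n\<close> through vertices \<open>\<ge> n\<close>; this identifies the invariant
  Borel set of such points with the Markov shift of the loop graph formed by all these loops.
  Otherwise \<open>x\<close> has a last or a first visit to \<open>n\<close>, so it is a translate of a point whose last
  (first) visit to \<open>n\<close> happens at time 0. The set of those points meets none of its own
  translates, so the remaining points are covered by countably many wandering sets.\<close>

section \<open>Borel structure and the shift\<close>

lemma measurable_coordinate [measurable]:
  "(\<lambda>x::int \<Rightarrow> nat. x i) \<in> measurable borel (count_space UNIV)"
proof -
  have "(\<lambda>x::int \<Rightarrow> nat. x i) \<in> borel_measurable borel"
    by (intro borel_measurable_continuous_onI continuous_on_product_coordinates)
  then show ?thesis using sets_borel_eq_count_space measurable_cong_sets by blast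
qed

lemma measurable_into_shift_space:
  fixes f :: "'a \<Rightarrow> int \<Rightarrow> nat"
  assumes "\<And>i. (\<lambda>x. f x i) \<in> measurable M (count_space UNIV)"
  shows "f \<in> measurable M borel"
proof -
  have "(\<lambda>x. f x i) \<in> borel_measurable M" for i
    using assms[of i] sets_borel_eq_count_space measurable_cong_sets by blast
  then show ?thesis by (rule measurable_coordinatewise_then_product)
qed

lemma measurable_borel_on:
  assumes "h \<in> measurable borel borel" "h ` S \<subseteq> S'"
  shows "h \<in> borel_on S \<rightarrow>\<^sub>M borel_on S'"
  unfolding borel_on_def
proof (rule measurable_restrict_space2)
  show "h \<in> space (restrict_space borel S) \<rightarrow> S'"
    using assms(2) by (auto simp: space_restrict_space)
  show "h \<in> restrict_space borel S \<rightarrow>\<^sub>M borel"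
    using assms(1) by (rule measurable_restrict_space1)
qed

lemma shift_pow_shift_pow: "shift_pow a (shift_pow b x) = shift_pow (a + b) x"
  by (auto simp: shift_pow_def add_ac)

lemma shift_pow_0 [simp]: "shift_pow 0 x = x"
  by (simp add: shift_pow_def)

lemma shift_pow_apply: "shift_pow k x i = x (k + i)"
  by (simp add: shift_pow_def add.commute)

lemma shift_eq_shift_pow: "shift x = shift_pow 1 x"
  by (simp add: shift_def shift_pow_def)

lemma measurable_shift_pow: "shift_pow k \<in> measurable borel borel"
  by (rule measurable_into_shift_space) (simp add: shift_pow_def)

lemma image_shift_pow_eq_vimage: "shift_pow k ` S = shift_pow (- k) -` S"
proof
  show "shift_pow k ` S \<subseteq> shift_pow (- k) -` S" by (auto simp: shift_pow_shift_pow)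
  show "shift_pow (- k) -` S \<subseteq> shift_pow k ` S"
  proof
    fix x assume "x \<in> shift_pow (- k) -` S"
    moreover have "x = shift_pow k (shift_pow (- k) x)" by (simp add: shift_pow_shift_pow)
    ultimately show "x \<in> shift_pow k ` S" by blast
  qed
qed

lemma sets_borel_image_shift_pow: "S \<in> sets borel \<Longrightarrow> shift_pow k ` S \<in> sets borel"
  unfolding image_shift_pow_eq_vimage using measurable_sets[OF measurable_shift_pow] by simp

lemma shift_image_eq_if_shift_pow_closed:
  assumes "\<And>k x. x \<in> S \<Longrightarrow> shift_pow k x \<in> S"
  shows "shift ` S = S"
proof
  show "shift ` S \<subseteq> S" using assms by (auto simp: shift_eq_shift_pow)
  show "S \<subseteq> shift ` S"
  proof
    fix x assume "x \<in> S"
    then have "shift_pow (- 1) x \<in> S" by (rule assms)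
    moreover have "x = shift (shift_pow (- 1) x)"
      by (simp add: shift_eq_shift_pow shift_pow_shift_pow)
    ultimately show "x \<in> shift ` S" by blast
  qed
qed

lemma markov_shift_shift_pow: "x \<in> markov_shift G \<Longrightarrow> shift_pow k x \<in> markov_shift G"
  unfolding markov_shift_def shift_pow_def by (simp add: algebra_simps)

lemma sets_borel_markov_shift: "markov_shift G \<in> sets borel"
  unfolding markov_shift_def by measurable

lemma sets_borel_on_markov_shift:
  "S \<in> sets borel \<Longrightarrow> S \<subseteq> markov_shift G \<Longrightarrow> S \<in> sets (borel_on (markov_shift G))"
  unfolding borel_on_def using sets_borel_markov_shift by (subst sets_restrict_space_iff) auto

section \<open>Recurrent and transient points\<close>

lemma int_last_occurrence:
  fixes P :: "int \<Rightarrow> bool"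
  assumes "P t0" "\<forall>j>i. \<not> P j"
  obtains t where "P t" "\<forall>j>t. \<not> P j"
proof
  define S where "S = {j. P j \<and> t0 \<le> j \<and> j \<le> i}"
  have "t0 \<le> i" using assms by (meson not_le)
  then have "t0 \<in> S" using assms(1) unfolding S_def by simp
  moreover have "finite S" unfolding S_def by (rule finite_subset[of _ "{t0..i}"]) auto
  ultimately have "Max S \<in> S" by (auto intro: Max_in)
  then show "P (Max S)" unfolding S_def by simp
  show "\<forall>j>Max S. \<not> P j"
  proof (intro allI impI notI)
    fix j assume "Max S < j" "P j"
    then have "j \<in> S" using \<open>Max S \<in> S\<close> assms(2) unfolding S_def by (auto simp: not_less)
    then show False using Max_ge[OF \<open>finite S\<close>] \<open>Max S < j\<close> by fastforce
  qed
qed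

lemma int_first_occurrence:
  fixes P :: "int \<Rightarrow> bool"
  assumes "P t0" "\<forall>j<i. \<not> P j"
  obtains t where "P t" "\<forall>j<t. \<not> P j"
proof -
  obtain t where "P (- t)" "\<forall>j>t. \<not> P (- j)"
    by (rule int_last_occurrence[of "\<lambda>j. P (- j)" "- t0" "- i"]) (use assms in auto)
  moreover have "\<not> P j" if "j < - t" for j
    using \<open>\<forall>j>t. \<not> P (- j)\<close> that by (metis minus_less_iff minus_minus)
  ultimately show ?thesis using that by auto
qed

definition min_recurrent :: "graph \<Rightarrow> nat \<Rightarrow> (int \<Rightarrow> nat) set" where
  "min_recurrent G n = {x \<in> markov_shift G. (\<forall>i. n \<le> tail G (x i)) \<and>
     (\<forall>i. \<exists>j>i. tail G (x j) = n) \<and> (\<forall>i. \<exists>j<i. tail G (x j) = n)}"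

definition transient_part :: "graph \<Rightarrow> (int \<Rightarrow> nat) set" where
  "transient_part G = markov_shift G - (\<Union>n. min_recurrent G n)"

lemma sets_borel_min_recurrent: "min_recurrent G n \<in> sets borel"
proof -
  have "min_recurrent G n = markov_shift G \<inter> {x. (\<forall>i. n \<le> tail G (x i)) \<and>
      (\<forall>i. \<exists>j>i. tail G (x j) = n) \<and> (\<forall>i. \<exists>j<i. tail G (x j) = n)}"
    by (auto simp: min_recurrent_def)
  also have "\<dots> \<in> sets borel" by (rule sets.Int[OF sets_borel_markov_shift]) measurable
  finally show ?thesis .
qed

lemma min_recurrent_shift_pow: "x \<in> min_recurrent G n \<Longrightarrow> shift_pow k x \<in> min_recurrent G n"
  unfolding min_recurrent_def
proof (safe intro!: markov_shift_shift_pow)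
  fix i
  assume x: "\<forall>i. n \<le> tail G (x i)" "\<forall>i. \<exists>j>i. tail G (x j) = n" "\<forall>i. \<exists>j<i. tail G (x j) = n"
  then show "n \<le> tail G (shift_pow k x i)" by (simp add: shift_pow_def)
  obtain j where "j > i + k" "tail G (x j) = n" using x(2) by blast
  then show "\<exists>j>i. tail G (shift_pow k x j) = n"
    by (intro exI[of _ "j - k"]) (simp add: shift_pow_def)
  obtain j' where "j' < i + k" "tail G (x j') = n" using x(3) by blast
  then show "\<exists>j<i. tail G (shift_pow k x j) = n"
    by (intro exI[of _ "j' - k"]) (simp add: shift_pow_def)
qed

lemma min_recurrent_visits:
  assumes "x \<in> min_recurrent G n"
  shows "\<exists>j\<le>i. tail G (x j) = n" "\<exists>j>i. tail G (x j) = n"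
  using assms unfolding min_recurrent_def by (blast intro: less_imp_le)+

lemma disjoint_family_min_recurrent: "disjoint_family (min_recurrent G)"
  unfolding disjoint_family_on_def
proof (intro ballI impI equals0I)
  fix n m x assume "n \<noteq> m" and x: "x \<in> min_recurrent G n \<inter> min_recurrent G m"
  then obtain i j where "tail G (x i) = n" "tail G (x j) = m"
    unfolding min_recurrent_def by blast
  then have "m \<le> n" "n \<le> m" using x unfolding min_recurrent_def by auto
  then show False using \<open>n \<noteq> m\<close> by simp
qed

definition last_visit_at_0 :: "graph \<Rightarrow> nat \<Rightarrow> (int \<Rightarrow> nat) set" where
  "last_visit_at_0 G n = {x \<in> markov_shift G. tail G (x 0) = n \<and> (\<forall>i>0. tail G (x i) \<noteq> n)}"

definition first_visit_at_0 :: "graph \<Rightarrow> nat \<Rightarrow> (int \<Rightarrow> nat) set" where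
  "first_visit_at_0 G n = {x \<in> markov_shift G. tail G (x 0) = n \<and> (\<forall>i<0. tail G (x i) \<noteq> n)}"

lemma sets_borel_last_visit_at_0: "last_visit_at_0 G n \<in> sets borel"
proof -
  have "last_visit_at_0 G n = markov_shift G \<inter> {x. tail G (x 0) = n \<and> (\<forall>i>0. tail G (x i) \<noteq> n)}"
    by (auto simp: last_visit_at_0_def)
  also have "\<dots> \<in> sets borel" by (rule sets.Int[OF sets_borel_markov_shift]) measurable
  finally show ?thesis .
qed

lemma sets_borel_first_visit_at_0: "first_visit_at_0 G n \<in> sets borel"
proof -
  have "first_visit_at_0 G n = markov_shift G \<inter> {x. tail G (x 0) = n \<and> (\<forall>i<0. tail G (x i) \<noteq> n)}"
    by (auto simp: first_visit_at_0_def)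
  also have "\<dots> \<in> sets borel" by (rule sets.Int[OF sets_borel_markov_shift]) measurable
  finally show ?thesis .
qed

lemma last_visit_at_0_shift_pow_eq:
  assumes "a \<in> last_visit_at_0 G n" "b \<in> last_visit_at_0 G n" "shift_pow k a = shift_pow l b"
  shows "k = l"
proof -
  have False if "a \<in> last_visit_at_0 G n" "b \<in> last_visit_at_0 G n"
    "shift_pow k a = shift_pow l b" "k < l" for a b k l
  proof -
    have "a 0 = b (l - k)" using fun_cong[OF that(3), of "- k"] by (simp add: shift_pow_def)
    then show False using that(1,2,4) by (auto simp: last_visit_at_0_def)
  qed
  then show ?thesis using assms by (metis linorder_neqE)
qed

lemma first_visit_at_0_shift_pow_eq:
  assumes "a \<in> first_visit_at_0 G n" "b \<in> first_visit_at_0 G n" "shift_pow k a = shift_pow l b"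
  shows "k = l"
proof -
  have False if "a \<in> first_visit_at_0 G n" "b \<in> first_visit_at_0 G n"
    "shift_pow k a = shift_pow l b" "k < l" for a b k l
  proof -
    have "a (k - l) = b 0" using fun_cong[OF that(3), of "- l"] by (simp add: shift_pow_def)
    then have "tail G (a (k - l)) = n" using that(2) by (simp add: first_visit_at_0_def)
    then show False using that(1,4) by (auto simp: first_visit_at_0_def)
  qed
  then show ?thesis using assms by (metis linorder_neqE)
qed

lemma wandering_image_shift_pow:
  assumes "S \<in> sets borel" "S \<subseteq> markov_shift G"
    and "\<And>a b k l. a \<in> S \<Longrightarrow> b \<in> S \<Longrightarrow> shift_pow k a = shift_pow l b \<Longrightarrow> k = l"
  shows "wandering G (shift_pow t ` S)"
  unfolding wandering_def
proof (intro conjI allI impI)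
  show "shift_pow t ` S \<in> sets (borel_on (markov_shift G))"
    using assms(1,2) markov_shift_shift_pow
    by (intro sets_borel_on_markov_shift sets_borel_image_shift_pow) auto
  fix k l :: int
  assume "k \<noteq> l"
  then show "shift_pow k ` shift_pow t ` S \<inter> shift_pow l ` shift_pow t ` S = {}"
    using assms(3) by (fastforce simp: shift_pow_shift_pow)
qed

lemma weakly_wanderingI_countable_cover:
  assumes "A \<in> sets (borel_on (markov_shift G))" "countable \<W>" "\<W> \<noteq> {}"
    and "\<And>W. W \<in> \<W> \<Longrightarrow> wandering G W" "A \<subseteq> \<Union>\<W>"
  shows "weakly_wandering G A"
  unfolding weakly_wandering_def
  using assms
  by (intro conjI exI[of _ "from_nat_into \<W>"]) (auto simp: from_nat_into range_from_nat_into)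

lemma transient_part_cover:
  assumes "x \<in> transient_part G"
  obtains n t where "shift_pow t x \<in> last_visit_at_0 G n \<or> shift_pow t x \<in> first_visit_at_0 G n"
proof -
  have x: "x \<in> markov_shift G" "\<And>n. x \<notin> min_recurrent G n"
    using assms unfolding transient_part_def by auto
  define n where "n = (LEAST n. \<exists>i. tail G (x i) = n)"
  have "\<exists>i. tail G (x i) = n" unfolding n_def by (rule LeastI_ex) blast
  then obtain t0 where t0: "tail G (x t0) = n" ..
  have "n \<le> tail G (x i)" for i unfolding n_def by (rule Least_le) blast
  then have "(\<exists>i. \<forall>j>i. tail G (x j) \<noteq> n) \<or> (\<exists>i. \<forall>j<i. tail G (x j) \<noteq> n)"
    using x unfolding min_recurrent_def by blast
  then show ?thesis
  proof (elim disjE exE)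
    fix i assume "\<forall>j>i. tail G (x j) \<noteq> n"
    then obtain t where "tail G (x t) = n" "\<forall>j>t. tail G (x j) \<noteq> n"
      using int_last_occurrence[of "\<lambda>j. tail G (x j) = n"] t0 by blast
    then have "shift_pow t x \<in> last_visit_at_0 G n"
      unfolding last_visit_at_0_def using markov_shift_shift_pow[OF x(1)]
      by (auto simp: shift_pow_def)
    then show ?thesis using that by blast
  next
    fix i assume "\<forall>j<i. tail G (x j) \<noteq> n"
    then obtain t where "tail G (x t) = n" "\<forall>j<t. tail G (x j) \<noteq> n"
      using int_first_occurrence[of "\<lambda>j. tail G (x j) = n"] t0 by blast
    then have "shift_pow t x \<in> first_visit_at_0 G n"
      unfolding first_visit_at_0_def using markov_shift_shift_pow[OF x(1)]
      by (auto simp: shift_pow_def)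
    then show ?thesis using that by blast
  qed
qed

lemma weakly_wandering_transient_part: "weakly_wandering G (transient_part G)"
proof -
  define \<W> where "\<W> = range (\<lambda>(n, t). shift_pow t ` last_visit_at_0 G n)
    \<union> range (\<lambda>(n, t). shift_pow t ` first_visit_at_0 G n)"
  have "transient_part G \<in> sets borel"
    unfolding transient_part_def using sets_borel_min_recurrent sets_borel_markov_shift by blast
  then have "transient_part G \<in> sets (borel_on (markov_shift G))"
    by (rule sets_borel_on_markov_shift) (auto simp: transient_part_def)
  moreover have "countable \<W>" "\<W> \<noteq> {}" unfolding \<W>_def by auto
  moreover have "wandering G (shift_pow t ` last_visit_at_0 G n)" for t n
    by (rule wandering_image_shift_pow[OF sets_borel_last_visit_at_0 _ last_visit_at_0_shift_pow_eq])
      (auto simp: last_visit_at_0_def)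
  moreover have "wandering G (shift_pow t ` first_visit_at_0 G n)" for t n
    by (rule wandering_image_shift_pow[OF sets_borel_first_visit_at_0 _ first_visit_at_0_shift_pow_eq])
      (auto simp: first_visit_at_0_def)
  moreover have "transient_part G \<subseteq> \<Union>\<W>"
  proof
    fix x assume "x \<in> transient_part G"
    then obtain n t where "shift_pow t x \<in> last_visit_at_0 G n \<or> shift_pow t x \<in> first_visit_at_0 G n"
      by (rule transient_part_cover)
    moreover have "x = shift_pow (- t) (shift_pow t x)" by (simp add: shift_pow_shift_pow)
    ultimately show "x \<in> \<Union>\<W>" unfolding \<W>_def by blast
  qed
  ultimately show ?thesis
    by (intro weakly_wanderingI_countable_cover[of _ _ \<W>]) (auto simp: \<W>_def split: prod.splits)
qed

lemma shift_image_transient_part: "shift ` transient_part G = transient_part G"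
proof (rule shift_image_eq_if_shift_pow_closed)
  fix k x assume x: "x \<in> transient_part G"
  have "shift_pow (- k) (shift_pow k x) = x" by (simp add: shift_pow_shift_pow)
  then have "shift_pow k x \<notin> min_recurrent G n" for n
    using x min_recurrent_shift_pow[of "shift_pow k x" G n "- k"] unfolding transient_part_def by auto
  then show "shift_pow k x \<in> transient_part G"
    using x markov_shift_shift_pow unfolding transient_part_def by blast
qed

section \<open>The loop graph of first-return loops\<close>

definition loop_arc :: "nat list \<Rightarrow> nat \<Rightarrow> nat" where
  "loop_arc p j = prod_encode (list_encode p, j)"

definition arc_loop :: "nat \<Rightarrow> nat list" where
  "arc_loop c = list_decode (fst (prod_decode c))"

definition arc_index :: "nat \<Rightarrow> nat" where
  "arc_index c = snd (prod_decode c)"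

lemma arc_loop_loop_arc [simp]: "arc_loop (loop_arc p j) = p"
  by (simp add: arc_loop_def loop_arc_def)

lemma arc_index_loop_arc [simp]: "arc_index (loop_arc p j) = j"
  by (simp add: arc_index_def loop_arc_def)

lemma loop_arc_arc_loop_arc_index [simp]: "loop_arc (arc_loop c) (arc_index c) = c"
  by (simp add: loop_arc_def arc_loop_def arc_index_def)

lemma loop_arc_eq_iff [simp]: "loop_arc p j = loop_arc q k \<longleftrightarrow> p = q \<and> j = k"
  by (metis arc_loop_loop_arc arc_index_loop_arc)

definition return_loops :: "graph \<Rightarrow> nat \<Rightarrow> nat list set" where
  "return_loops G n = {p. p \<noteq> [] \<and> set p \<subseteq> arcs G \<and> tail G (hd p) = n \<and> head G (last p) = n \<and>
     (\<forall>i. Suc i < length p \<longrightarrow> head G (p ! i) = tail G (p ! Suc i) \<and> head G (p ! i) \<noteq> n) \<and>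
     (\<forall>e\<in>set p. n \<le> tail G e)}"

text \<open>Vertex 0 is the base point. The arc \<open>loop_arc p j\<close> is the \<open>j\<close>-th arc of the loop \<open>p\<close>; it
  ends in the vertex \<open>Suc (loop_arc p j)\<close>, or in 0 if it is the last arc of \<open>p\<close>.\<close>
definition return_loop_graph :: "graph \<Rightarrow> nat \<Rightarrow> graph" where
  "return_loop_graph G n =
    \<lparr>verts = insert 0 {Suc (loop_arc p j) |p j. p \<in> return_loops G n \<and> Suc j < length p},
     arcs = {loop_arc p j |p j. p \<in> return_loops G n \<and> j < length p},
     tail = (\<lambda>c. if arc_index c = 0 then 0 else Suc (loop_arc (arc_loop c) (arc_index c - 1))),
     head = (\<lambda>c. if Suc (arc_index c) = length (arc_loop c) then 0 else Suc c)\<rparr>"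

lemma return_loop_graph_simps:
  "verts (return_loop_graph G n) =
     insert 0 {Suc (loop_arc p j) |p j. p \<in> return_loops G n \<and> Suc j < length p}"
  "arcs (return_loop_graph G n) = {loop_arc p j |p j. p \<in> return_loops G n \<and> j < length p}"
  "tail (return_loop_graph G n) c =
     (if arc_index c = 0 then 0 else Suc (loop_arc (arc_loop c) (arc_index c - 1)))"
  "head (return_loop_graph G n) c = (if Suc (arc_index c) = length (arc_loop c) then 0 else Suc c)"
  by (simp_all add: return_loop_graph_def)

lemma arcs_return_loop_graph_iff:
  "c \<in> arcs (return_loop_graph G n) \<longleftrightarrow>
    arc_loop c \<in> return_loops G n \<and> arc_index c < length (arc_loop c)"
  unfolding return_loop_graph_simps by (auto intro!: exI[of _ "arc_loop c"] exI[of _ "arc_index c"])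

lemma tail_return_loop_graph_loop_arc:
  "tail (return_loop_graph G n) (loop_arc p j) = (if j = 0 then 0 else Suc (loop_arc p (j - 1)))"
  by (simp add: return_loop_graph_simps)

lemma head_return_loop_graph_loop_arc:
  "head (return_loop_graph G n) (loop_arc p j) =
    (if Suc j = length p then 0 else Suc (loop_arc p j))"
  by (simp add: return_loop_graph_simps)

definition loop_path :: "nat list \<Rightarrow> nat list" where
  "loop_path p = map (loop_arc p) [0..<length p]"

lemma set_loop_path: "set (loop_path p) = {loop_arc p j |j. j < length p}"
  by (auto simp: loop_path_def)

lemma inner_verts_loop_path:
  "inner_verts (return_loop_graph G n) (loop_path p) =
    map (\<lambda>j. Suc (loop_arc p j)) [0..<length p - 1]"
proof -
  have "butlast (loop_path p) = map (loop_arc p) [0..<length p - 1]"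
    unfolding loop_path_def map_butlast[symmetric]
    by (cases "length p") (simp_all del: upt_Suc add: upt_Suc_append)
  then show ?thesis
    unfolding inner_verts_def by (auto simp: head_return_loop_graph_loop_arc)
qed

lemma is_simple_loop_loop_path:
  assumes "p \<in> return_loops G n"
  shows "is_simple_loop (return_loop_graph G n) 0 (loop_path p)"
proof -
  have "p \<noteq> []" using assms unfolding return_loops_def by blast
  then show ?thesis
    using assms unfolding is_simple_loop_def inner_verts_loop_path
    by (auto simp: loop_path_def hd_map last_map distinct_map inj_on_def return_loop_graph_simps
        tail_return_loop_graph_loop_arc head_return_loop_graph_loop_arc)
qed

lemma loop_graph_return_loop_graph: "loop_graph (return_loop_graph G n)"
  unfolding loop_graph_def
proof (intro conjI exI[of _ 0] exI[of _ "loop_path ` return_loops G n"])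
  show "wf_digraph (return_loop_graph G n)"
    by unfold_locales (auto simp: return_loop_graph_simps)
  show "0 \<in> verts (return_loop_graph G n)" by (simp add: return_loop_graph_simps)
  show "\<forall>c\<in>loop_path ` return_loops G n. is_simple_loop (return_loop_graph G n) 0 c"
    using is_simple_loop_loop_path by blast
  show "arcs (return_loop_graph G n) = (\<Union>c\<in>loop_path ` return_loops G n. set c)"
    by (auto simp: return_loop_graph_simps set_loop_path)
  show "verts (return_loop_graph G n) =
      insert 0 (\<Union>c\<in>loop_path ` return_loops G n. set (inner_verts (return_loop_graph G n) c))"
    by (auto simp: return_loop_graph_simps inner_verts_loop_path)
  show "\<forall>c\<in>loop_path ` return_loops G n. \<forall>d\<in>loop_path ` return_loops G n. c \<noteq> d \<longrightarrow>
      set c \<inter> set d = {} \<and>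
      set (inner_verts (return_loop_graph G n) c) \<inter> set (inner_verts (return_loop_graph G n) d) = {}"
    by (auto simp: inner_verts_loop_path set_loop_path)
qed

section \<open>Coding recurrent points by first-return loops\<close>

definition time_since_visit :: "graph \<Rightarrow> nat \<Rightarrow> (int \<Rightarrow> nat) \<Rightarrow> nat" where
  "time_since_visit G n z = (LEAST d. tail G (z (- int d)) = n)"

definition time_to_next_visit :: "graph \<Rightarrow> nat \<Rightarrow> (int \<Rightarrow> nat) \<Rightarrow> nat" where
  "time_to_next_visit G n z = (LEAST d. 0 < d \<and> tail G (z (int d)) = n)"

text \<open>The stretch of \<open>z\<close> from its last visit to \<open>n\<close> at or before time 0 up to its next visit
  after time 0; \<open>loop_symbol\<close> records it together with the position of time 0 in it.\<close>
definition current_loop :: "graph \<Rightarrow> nat \<Rightarrow> (int \<Rightarrow> nat) \<Rightarrow> nat list" where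
  "current_loop G n z =
     map (\<lambda>k. z (int k - int (time_since_visit G n z)))
       [0..<time_since_visit G n z + time_to_next_visit G n z]"

definition loop_symbol :: "graph \<Rightarrow> nat \<Rightarrow> (int \<Rightarrow> nat) \<Rightarrow> nat" where
  "loop_symbol G n z = loop_arc (current_loop G n z) (time_since_visit G n z)"

definition loop_code :: "graph \<Rightarrow> nat \<Rightarrow> (int \<Rightarrow> nat) \<Rightarrow> int \<Rightarrow> nat" where
  "loop_code G n x = (\<lambda>i. loop_symbol G n (shift_pow i x))"

definition loop_decode :: "(int \<Rightarrow> nat) \<Rightarrow> int \<Rightarrow> nat" where
  "loop_decode y = (\<lambda>i. arc_loop (y i) ! arc_index (y i))"

lemma time_since_visit_eqI:
  assumes "tail G (x (i - int b)) = n" "\<And>d. d < b \<Longrightarrow> tail G (x (i - int d)) \<noteq> n"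
  shows "time_since_visit G n (shift_pow i x) = b"
  unfolding time_since_visit_def shift_pow_apply
  by (rule Least_equality) (use assms not_less in auto)

lemma time_to_next_visit_eqI:
  assumes "0 < f" "tail G (x (i + int f)) = n"
    and "\<And>d. 0 < d \<Longrightarrow> d < f \<Longrightarrow> tail G (x (i + int d)) \<noteq> n"
  shows "time_to_next_visit G n (shift_pow i x) = f"
  unfolding time_to_next_visit_def shift_pow_apply
  by (rule Least_equality) (use assms not_less in auto)

lemma time_since_visit_spec:
  assumes "\<exists>j\<le>i. tail G (x j) = n"
  shows "tail G (x (i - int (time_since_visit G n (shift_pow i x)))) = n"
    and "\<And>d. d < time_since_visit G n (shift_pow i x) \<Longrightarrow> tail G (x (i - int d)) \<noteq> n"
proof -
  obtain j where j: "j \<le> i" "tail G (x j) = n" using assms by blast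
  have "tail G (shift_pow i x (- int (time_since_visit G n (shift_pow i x)))) = n"
    unfolding time_since_visit_def
    by (rule LeastI[of _ "nat (i - j)"]) (use j in \<open>simp add: shift_pow_apply\<close>)
  then show "tail G (x (i - int (time_since_visit G n (shift_pow i x)))) = n"
    by (simp add: shift_pow_apply)
  show "tail G (x (i - int d)) \<noteq> n" if "d < time_since_visit G n (shift_pow i x)" for d
    using not_less_Least[OF that[unfolded time_since_visit_def]] by (simp add: shift_pow_apply)
qed

lemma time_to_next_visit_spec:
  assumes "\<exists>j>i. tail G (x j) = n"
  shows "0 < time_to_next_visit G n (shift_pow i x)"
    and "tail G (x (i + int (time_to_next_visit G n (shift_pow i x)))) = n"
    and "\<And>d. 0 < d \<Longrightarrow> d < time_to_next_visit G n (shift_pow i x) \<Longrightarrow> tail G (x (i + int d)) \<noteq> n"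
proof -
  obtain j where j: "j > i" "tail G (x j) = n" using assms by blast
  have "0 < time_to_next_visit G n (shift_pow i x) \<and>
      tail G (shift_pow i x (int (time_to_next_visit G n (shift_pow i x)))) = n"
    unfolding time_to_next_visit_def
    by (rule LeastI[of _ "nat (j - i)"]) (use j in \<open>simp add: shift_pow_apply\<close>)
  then show "0 < time_to_next_visit G n (shift_pow i x)"
    "tail G (x (i + int (time_to_next_visit G n (shift_pow i x)))) = n" by (auto simp: shift_pow_apply)
  show "tail G (x (i + int d)) \<noteq> n" if "0 < d" "d < time_to_next_visit G n (shift_pow i x)" for d
    using not_less_Least[OF that(2)[unfolded time_to_next_visit_def]] that(1)
    by (simp add: shift_pow_apply)
qed

lemma current_loop_shift_pow:
  "current_loop G n (shift_pow i x) =
     map (\<lambda>k. x (i - int (time_since_visit G n (shift_pow i x)) + int k))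
       [0..<time_since_visit G n (shift_pow i x) + time_to_next_visit G n (shift_pow i x)]"
  unfolding current_loop_def by (simp add: shift_pow_apply algebra_simps)

lemma map_segment_in_return_loops:
  assumes x: "x \<in> markov_shift G" "\<And>t. n \<le> tail G (x t)"
    and L: "0 < L" "tail G (x a) = n" "tail G (x (a + int L)) = n"
    and inner: "\<And>k. 0 < k \<Longrightarrow> k < L \<Longrightarrow> tail G (x (a + int k)) \<noteq> n"
  shows "map (\<lambda>k. x (a + int k)) [0..<L] \<in> return_loops G n"
proof -
  define q where "q = map (\<lambda>k. x (a + int k)) [0..<L]"
  have arc: "x t \<in> arcs G" and step: "head G (x t) = tail G (x (t + 1))" for t
    using x(1) unfolding markov_shift_def by auto
  have q_nth: "k < L \<Longrightarrow> q ! k = x (a + int k)" and length_q: "length q = L" for k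
    unfolding q_def by simp_all
  have "q \<noteq> []" using L(1) length_q by auto
  have "last q = x (a + int (L - 1))"
    using \<open>q \<noteq> []\<close> L(1) by (simp add: last_conv_nth q_nth length_q)
  moreover have "a + int (L - 1) + 1 = a + int L" using L(1) by simp
  ultimately have last_q: "head G (last q) = n" using step[of "a + int (L - 1)"] L(3) by simp
  show ?thesis
    unfolding return_loops_def q_def[symmetric]
  proof (intro CollectI conjI allI impI ballI)
    show "q \<noteq> []" "head G (last q) = n" by fact+
    show "set q \<subseteq> arcs G" unfolding q_def using arc by auto
    show "tail G (hd q) = n" using \<open>q \<noteq> []\<close> L(1,2) by (simp add: hd_conv_nth q_nth)
    fix k assume "Suc k < length q"
    then show "head G (q ! k) = tail G (q ! Suc k)" "head G (q ! k) \<noteq> n"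
      using step[of "a + int k"] inner[of "Suc k"] by (simp_all add: q_nth length_q add_ac)
  next
    fix e assume "e \<in> set q"
    then show "n \<le> tail G e" unfolding q_def using x(2) by auto
  qed
qed

lemma current_loop_in_return_loops:
  assumes x: "x \<in> min_recurrent G n"
  shows "current_loop G n (shift_pow i x) \<in> return_loops G n"
proof -
  define b where "b = time_since_visit G n (shift_pow i x)"
  define f where "f = time_to_next_visit G n (shift_pow i x)"
  note b = time_since_visit_spec[OF min_recurrent_visits(1)[OF x], where i = i, folded b_def]
  note f = time_to_next_visit_spec[OF min_recurrent_visits(2)[OF x], where i = i, folded f_def]
  have "current_loop G n (shift_pow i x) = map (\<lambda>k. x (i - int b + int k)) [0..<b + f]"
    unfolding current_loop_shift_pow b_def f_def ..
  also have "\<dots> \<in> return_loops G n"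
  proof (rule map_segment_in_return_loops)
    show "x \<in> markov_shift G" "\<And>t. n \<le> tail G (x t)" using x unfolding min_recurrent_def by auto
    show "0 < b + f" "tail G (x (i - int b)) = n" using b(1) f(1) by simp_all
    show "tail G (x (i - int b + int (b + f))) = n" using f(2) by simp
    fix k assume k: "0 < k" "k < b + f"
    show "tail G (x (i - int b + int k)) \<noteq> n"
    proof (cases "k \<le> b")
      case True
      have "i - int b + int k = i - (int b - int k)" by simp
      then show ?thesis using b(2)[of "b - k"] k(1) True by (simp only:) (simp add: of_nat_diff)
    next
      case False
      have "i - int b + int k = i + (int k - int b)" by simp
      then show ?thesis using f(3)[of "k - b"] k(2) False by (simp only:) (simp add: of_nat_diff)
    qed
  qed
  finally show ?thesis .
qed

lemma loop_decode_loop_code: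
  assumes x: "x \<in> min_recurrent G n"
  shows "loop_decode (loop_code G n x) = x"
proof
  fix i
  have "0 < time_to_next_visit G n (shift_pow i x)"
    by (rule time_to_next_visit_spec(1)[OF min_recurrent_visits(2)[OF x]])
  then show "loop_decode (loop_code G n x) i = x i"
    by (simp add: loop_decode_def loop_code_def loop_symbol_def current_loop_shift_pow)
qed

lemma loop_code_succ:
  assumes x: "x \<in> min_recurrent G n" and f1: "time_to_next_visit G n (shift_pow i x) \<noteq> 1"
  shows "loop_code G n x (i + 1) =
    loop_arc (current_loop G n (shift_pow i x)) (Suc (time_since_visit G n (shift_pow i x)))"
proof -
  define b where "b = time_since_visit G n (shift_pow i x)"
  define f where "f = time_to_next_visit G n (shift_pow i x)"
  note b = time_since_visit_spec[OF min_recurrent_visits(1)[OF x], where i = i, folded b_def]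
  note f = time_to_next_visit_spec[OF min_recurrent_visits(2)[OF x], where i = i, folded f_def]
  have "1 < f" using f(1) f1 unfolding f_def by simp
  have b': "time_since_visit G n (shift_pow (i + 1) x) = Suc b"
  proof (rule time_since_visit_eqI)
    show "tail G (x (i + 1 - int (Suc b))) = n" using b(1) by simp
    fix d assume "d < Suc b"
    then show "tail G (x (i + 1 - int d)) \<noteq> n"
      using f(3)[of 1] b(2)[of "d - 1"] \<open>1 < f\<close> by (cases d) (auto simp: algebra_simps)
  qed
  have f': "time_to_next_visit G n (shift_pow (i + 1) x) = f - 1"
  proof (rule time_to_next_visit_eqI)
    show "0 < f - 1" "tail G (x (i + 1 + int (f - 1))) = n" using \<open>1 < f\<close> f(2) by simp_all
    fix d assume "0 < d" "d < f - 1"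
    then show "tail G (x (i + 1 + int d)) \<noteq> n" using f(3)[of "Suc d"] by (simp add: add.assoc)
  qed
  have "current_loop G n (shift_pow (i + 1) x) =
      map (\<lambda>k. x (i + 1 - int (Suc b) + int k)) [0..<Suc b + (f - 1)]"
    unfolding current_loop_shift_pow b' f' ..
  also have "\<dots> = current_loop G n (shift_pow i x)"
    unfolding current_loop_shift_pow b_def[symmetric] f_def[symmetric] using \<open>1 < f\<close> by simp
  finally show ?thesis unfolding loop_code_def loop_symbol_def b' b_def by simp
qed

lemma loop_code_in_markov_shift:
  assumes x: "x \<in> min_recurrent G n"
  shows "loop_code G n x \<in> markov_shift (return_loop_graph G n)"
  unfolding markov_shift_def
proof (intro CollectI allI conjI)
  fix i
  define b where "b = time_since_visit G n (shift_pow i x)"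
  define f where "f = time_to_next_visit G n (shift_pow i x)"
  define q where "q = current_loop G n (shift_pow i x)"
  have "0 < f" "tail G (x (i + int f)) = n"
    using time_to_next_visit_spec[OF min_recurrent_visits(2)[OF x], where i = i] unfolding f_def by auto
  have q: "q \<in> return_loops G n" unfolding q_def by (rule current_loop_in_return_loops[OF x])
  have length_q: "length q = b + f" unfolding q_def current_loop_def b_def f_def by simp
  have code_i: "loop_code G n x i = loop_arc q b" unfolding loop_code_def loop_symbol_def q_def b_def ..
  show "loop_code G n x i \<in> arcs (return_loop_graph G n)"
    unfolding code_i return_loop_graph_simps using q length_q \<open>0 < f\<close> by auto
  show "head (return_loop_graph G n) (loop_code G n x i) =
      tail (return_loop_graph G n) (loop_code G n x (i + 1))"
  proof (cases "f = 1")
    case True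
    have "time_since_visit G n (shift_pow (i + 1) x) = 0"
      by (rule time_since_visit_eqI) (use \<open>tail G (x (i + int f)) = n\<close> True in simp_all)
    then have "tail (return_loop_graph G n) (loop_code G n x (i + 1)) = 0"
      by (simp add: loop_code_def loop_symbol_def tail_return_loop_graph_loop_arc)
    moreover have "head (return_loop_graph G n) (loop_code G n x i) = 0"
      unfolding code_i using length_q True by (simp add: head_return_loop_graph_loop_arc)
    ultimately show ?thesis by simp
  next
    case False
    then have "loop_code G n x (i + 1) = loop_arc q (Suc b)"
      using loop_code_succ[OF x] unfolding q_def b_def f_def by simp
    then show ?thesis using length_q False \<open>0 < f\<close> unfolding code_i
      by (simp add: head_return_loop_graph_loop_arc tail_return_loop_graph_loop_arc)
  qed
qed

section \<open>Decoding points of the loop shift\<close>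

lemma loop_shift_arc:
  assumes "y \<in> markov_shift (return_loop_graph G n)"
  shows "arc_loop (y i) \<in> return_loops G n" "arc_index (y i) < length (arc_loop (y i))"
  using assms unfolding markov_shift_def arcs_return_loop_graph_iff by blast+

lemma loop_shift_next:
  assumes y: "y \<in> markov_shift (return_loop_graph G n)"
    and j: "Suc (arc_index (y i)) < length (arc_loop (y i))"
  shows "y (i + 1) = loop_arc (arc_loop (y i)) (Suc (arc_index (y i)))"
proof -
  have "head (return_loop_graph G n) (y i) = tail (return_loop_graph G n) (y (i + 1))"
    using y unfolding markov_shift_def by blast
  then have nz: "arc_index (y (i + 1)) \<noteq> 0"
    and e: "loop_arc (arc_loop (y (i + 1))) (arc_index (y (i + 1)) - 1) = y i"
    using j by (auto simp: return_loop_graph_simps split: if_splits)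
  have "arc_loop (y (i + 1)) = arc_loop (y i)" "arc_index (y (i + 1)) - 1 = arc_index (y i)"
    by (metis e arc_loop_loop_arc) (metis e arc_index_loop_arc)
  with nz show ?thesis by (metis Suc_pred' neq0_conv loop_arc_arc_loop_arc_index)
qed

lemma loop_shift_wrap:
  assumes y: "y \<in> markov_shift (return_loop_graph G n)"
    and j: "Suc (arc_index (y i)) = length (arc_loop (y i))"
  shows "arc_index (y (i + 1)) = 0"
proof -
  have "head (return_loop_graph G n) (y i) = tail (return_loop_graph G n) (y (i + 1))"
    using y unfolding markov_shift_def by blast
  then show ?thesis using j by (simp add: return_loop_graph_simps split: if_splits)
qed

lemma loop_shift_prev:
  assumes y: "y \<in> markov_shift (return_loop_graph G n)" and j: "0 < arc_index (y i)"
  shows "y (i - 1) = loop_arc (arc_loop (y i)) (arc_index (y i) - 1)"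
proof -
  have "head (return_loop_graph G n) (y (i - 1)) = tail (return_loop_graph G n) (y (i - 1 + 1))"
    using y unfolding markov_shift_def by blast
  then have h: "head (return_loop_graph G n) (y (i - 1)) = tail (return_loop_graph G n) (y i)"
    by simp
  have t: "tail (return_loop_graph G n) (y i) = Suc (loop_arc (arc_loop (y i)) (arc_index (y i) - 1))"
    using j by (simp add: return_loop_graph_simps)
  have "head (return_loop_graph G n) (y (i - 1)) = Suc (y (i - 1))"
    using h t by (simp add: return_loop_graph_simps split: if_splits)
  with h t show ?thesis by simp
qed

lemma loop_shift_back:
  assumes y: "y \<in> markov_shift (return_loop_graph G n)"
  shows "k \<le> arc_index (y i) \<Longrightarrow> y (i - int k) = loop_arc (arc_loop (y i)) (arc_index (y i) - k)"
proof (induction k)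
  case (Suc k)
  then have IH: "y (i - int k) = loop_arc (arc_loop (y i)) (arc_index (y i) - k)" by simp
  have "0 < arc_index (y (i - int k))" using IH Suc.prems by simp
  then have "y (i - int k - 1) = loop_arc (arc_loop (y (i - int k))) (arc_index (y (i - int k)) - 1)"
    by (rule loop_shift_prev[OF y])
  then show ?case using IH by (simp add: algebra_simps)
qed simp

lemma loop_shift_forward:
  assumes y: "y \<in> markov_shift (return_loop_graph G n)"
  shows "arc_index (y i) + k < length (arc_loop (y i)) \<Longrightarrow>
    y (i + int k) = loop_arc (arc_loop (y i)) (arc_index (y i) + k)"
proof (induction k)
  case (Suc k)
  then have IH: "y (i + int k) = loop_arc (arc_loop (y i)) (arc_index (y i) + k)" by simp
  have "Suc (arc_index (y (i + int k))) < length (arc_loop (y (i + int k)))" using IH Suc.prems by simp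
  then have "y (i + int k + 1) = loop_arc (arc_loop (y (i + int k))) (Suc (arc_index (y (i + int k))))"
    by (rule loop_shift_next[OF y])
  then show ?case using IH by (simp add: algebra_simps)
qed simp

lemma loop_shift_block:
  assumes y: "y \<in> markov_shift (return_loop_graph G n)" and k: "k < length (arc_loop (y i))"
  shows "y (i - int (arc_index (y i)) + int k) = loop_arc (arc_loop (y i)) k"
proof (cases "k \<le> arc_index (y i)")
  case True
  then have "i - int (arc_index (y i)) + int k = i - int (arc_index (y i) - k)" by simp
  then show ?thesis using loop_shift_back[OF y, of "arc_index (y i) - k" i] True
    by (simp add: algebra_simps)
next
  case False
  then have "i - int (arc_index (y i)) + int k = i + int (k - arc_index (y i))" by simp
  then show ?thesis using loop_shift_forward[OF y, of i "k - arc_index (y i)"] False k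
    by (simp add: algebra_simps)
qed

lemma loop_shift_return:
  assumes y: "y \<in> markov_shift (return_loop_graph G n)"
  shows "arc_index (y (i + int (length (arc_loop (y i)) - arc_index (y i)))) = 0"
proof -
  let ?p = "arc_loop (y i)" and ?j = "arc_index (y i)"
  have "y (i + int (length ?p - 1 - ?j)) = loop_arc ?p (length ?p - 1)"
    using loop_shift_forward[OF y, of i "length ?p - 1 - ?j"] loop_shift_arc(2)[OF y, of i] by simp
  then have "arc_index (y (i + int (length ?p - 1 - ?j) + 1)) = 0"
    using loop_shift_wrap[OF y, of "i + int (length ?p - 1 - ?j)"] loop_shift_arc(2)[OF y, of i] by simp
  moreover have "i + int (length ?p - 1 - ?j) + 1 = i + int (length ?p - ?j)"
    using loop_shift_arc(2)[OF y, of i] by simp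
  ultimately show ?thesis by simp
qed

lemma tail_loop_decode_eq_iff:
  assumes y: "y \<in> markov_shift (return_loop_graph G n)"
  shows "tail G (loop_decode y t) = n \<longleftrightarrow> arc_index (y t) = 0"
proof -
  let ?p = "arc_loop (y t)" and ?j = "arc_index (y t)"
  have p: "?p \<in> return_loops G n" "?j < length ?p" by (rule loop_shift_arc[OF y])+
  show ?thesis
  proof (cases ?j)
    case 0
    then show ?thesis using p unfolding loop_decode_def return_loops_def by (auto simp: hd_conv_nth)
  next
    case (Suc j')
    then have "head G (?p ! j') = tail G (?p ! ?j)" "head G (?p ! j') \<noteq> n"
      using p unfolding return_loops_def by auto
    then show ?thesis unfolding loop_decode_def using Suc by simp
  qed
qed

lemma head_loop_decode:
  assumes y: "y \<in> markov_shift (return_loop_graph G n)"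
  shows "head G (loop_decode y t) = tail G (loop_decode y (t + 1))"
proof -
  let ?p = "arc_loop (y t)" and ?j = "arc_index (y t)"
  have p: "?p \<in> return_loops G n" "?j < length ?p" by (rule loop_shift_arc[OF y])+
  show ?thesis
  proof (cases "Suc ?j < length ?p")
    case True
    then show ?thesis
      using p loop_shift_next[OF y True] unfolding loop_decode_def return_loops_def by simp
  next
    case False
    then have "Suc ?j = length ?p" using p by simp
    then have "tail G (loop_decode y (t + 1)) = n"
      using loop_shift_wrap[OF y] tail_loop_decode_eq_iff[OF y] by simp
    moreover have "loop_decode y t = last ?p"
      using \<open>Suc ?j = length ?p\<close> unfolding loop_decode_def
      by (metis last_conv_nth diff_Suc_1 list.size(3) nat.distinct(1))
    ultimately show ?thesis using p unfolding return_loops_def by simp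
  qed
qed

lemma loop_decode_in_min_recurrent:
  assumes y: "y \<in> markov_shift (return_loop_graph G n)"
  shows "loop_decode y \<in> min_recurrent G n"
  unfolding min_recurrent_def
proof (intro CollectI conjI allI)
  have "loop_decode y t \<in> arcs G" "n \<le> tail G (loop_decode y t)" for t
    using loop_shift_arc[OF y, of t] unfolding loop_decode_def return_loops_def by auto
  then show "loop_decode y \<in> markov_shift G" "n \<le> tail G (loop_decode y t)" for t
    unfolding markov_shift_def using head_loop_decode[OF y] by auto
  fix t
  show "\<exists>s>t. tail G (loop_decode y s) = n"
    using loop_shift_return[OF y, of t] loop_shift_arc(2)[OF y, of t] tail_loop_decode_eq_iff[OF y]
    by (intro exI[of _ "t + int (length (arc_loop (y t)) - arc_index (y t))"]) auto
  have "y (t - 1 - int (arc_index (y (t - 1)))) = loop_arc (arc_loop (y (t - 1))) 0"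
    using loop_shift_back[OF y, of "arc_index (y (t - 1))" "t - 1"] by simp
  then show "\<exists>s<t. tail G (loop_decode y s) = n"
    using tail_loop_decode_eq_iff[OF y]
    by (intro exI[of _ "t - 1 - int (arc_index (y (t - 1)))"]) simp
qed

lemma time_since_visit_loop_decode:
  assumes y: "y \<in> markov_shift (return_loop_graph G n)"
  shows "time_since_visit G n (shift_pow i (loop_decode y)) = arc_index (y i)"
proof (rule time_since_visit_eqI)
  let ?p = "arc_loop (y i)" and ?j = "arc_index (y i)"
  have "y (i - int ?j) = loop_arc ?p 0" using loop_shift_back[OF y, of ?j i] by simp
  then show "tail G (loop_decode y (i - int ?j)) = n" using tail_loop_decode_eq_iff[OF y] by simp
  fix d assume "d < ?j"
  then have "y (i - int d) = loop_arc ?p (?j - d)" using loop_shift_back[OF y, of d i] by simp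
  then show "tail G (loop_decode y (i - int d)) \<noteq> n"
    using tail_loop_decode_eq_iff[OF y] \<open>d < ?j\<close> by simp
qed

lemma time_to_next_visit_loop_decode:
  assumes y: "y \<in> markov_shift (return_loop_graph G n)"
  shows "time_to_next_visit G n (shift_pow i (loop_decode y)) =
    length (arc_loop (y i)) - arc_index (y i)"
proof (rule time_to_next_visit_eqI)
  let ?p = "arc_loop (y i)" and ?j = "arc_index (y i)"
  show "0 < length ?p - ?j" using loop_shift_arc(2)[OF y] by simp
  show "tail G (loop_decode y (i + int (length ?p - ?j))) = n"
    using loop_shift_return[OF y] tail_loop_decode_eq_iff[OF y] by simp
  fix d assume "0 < d" "d < length ?p - ?j"
  then have "y (i + int d) = loop_arc ?p (?j + d)" using loop_shift_forward[OF y, of i d] by simp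
  then show "tail G (loop_decode y (i + int d)) \<noteq> n"
    using tail_loop_decode_eq_iff[OF y] \<open>0 < d\<close> by simp
qed

lemma loop_code_loop_decode:
  assumes y: "y \<in> markov_shift (return_loop_graph G n)"
  shows "loop_code G n (loop_decode y) = y"
proof
  fix i
  let ?p = "arc_loop (y i)" and ?j = "arc_index (y i)"
  have "?j < length ?p" by (rule loop_shift_arc(2)[OF y])
  have "current_loop G n (shift_pow i (loop_decode y)) =
      map (\<lambda>k. loop_decode y (i - int ?j + int k)) [0..<length ?p]"
    unfolding current_loop_shift_pow
    using \<open>?j < length ?p\<close> by (simp add: time_since_visit_loop_decode[OF y]
        time_to_next_visit_loop_decode[OF y])
  also have "\<dots> = ?p"
    by (rule nth_equalityI) (simp_all add: loop_decode_def loop_shift_block[OF y])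
  finally show "loop_code G n (loop_decode y) i = y i"
    by (simp add: loop_code_def loop_symbol_def time_since_visit_loop_decode[OF y])
qed

section \<open>The coding is a Borel isomorphism\<close>

lemma measurable_time_since_visit [measurable]:
  "time_since_visit G n \<in> measurable borel (count_space UNIV)"
  unfolding time_since_visit_def by measurable

lemma measurable_time_to_next_visit [measurable]:
  "time_to_next_visit G n \<in> measurable borel (count_space UNIV)"
  unfolding time_to_next_visit_def by measurable

lemma loop_symbol_eq_iff:
  "loop_symbol G n z = c \<longleftrightarrow> time_since_visit G n z = arc_index c \<and>
     time_since_visit G n z + time_to_next_visit G n z = length (arc_loop c) \<and>
     (\<forall>k<length (arc_loop c). z (int k - int (arc_index c)) = arc_loop c ! k)"
proof -
  have "loop_symbol G n z = c \<longleftrightarrow>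
      current_loop G n z = arc_loop c \<and> time_since_visit G n z = arc_index c"
    unfolding loop_symbol_def by (metis loop_arc_eq_iff loop_arc_arc_loop_arc_index)
  then show ?thesis unfolding list_eq_iff_nth_eq current_loop_def by auto
qed

lemma measurable_loop_symbol: "loop_symbol G n \<in> measurable borel (count_space UNIV)"
  unfolding measurable_count_space_eq2_countable
proof (intro conjI ballI)
  show "loop_symbol G n \<in> space borel \<rightarrow> UNIV" by simp
  fix c :: nat
  have "loop_symbol G n -` {c} \<inter> space borel = {z. time_since_visit G n z = arc_index c \<and>
     time_since_visit G n z + time_to_next_visit G n z = length (arc_loop c) \<and>
     (\<forall>k<length (arc_loop c). z (int k - int (arc_index c)) = arc_loop c ! k)}"
    unfolding set_eq_iff vimage_def by (simp add: loop_symbol_eq_iff)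
  also have "\<dots> \<in> sets borel" by measurable
  finally show "loop_symbol G n -` {c} \<inter> space borel \<in> sets borel" .
qed

lemma measurable_loop_code: "loop_code G n \<in> measurable borel borel"
  unfolding loop_code_def
  by (rule measurable_into_shift_space)
    (rule measurable_compose[OF measurable_shift_pow measurable_loop_symbol])

lemma measurable_loop_decode: "loop_decode \<in> measurable borel borel"
  unfolding loop_decode_def
  by (rule measurable_into_shift_space)
    (rule measurable_compose[OF measurable_coordinate measurable_count_space])

lemma borel_iso_min_recurrent:
  "borel_iso (min_recurrent G n) (markov_shift (return_loop_graph G n))"
  unfolding borel_iso_def
proof (intro exI conjI ballI)
  show "bij_betw (loop_code G n) (min_recurrent G n) (markov_shift (return_loop_graph G n))"
    by (rule bij_betw_byWitness[where f' = loop_decode])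
      (auto simp: loop_decode_loop_code loop_code_loop_decode loop_code_in_markov_shift
        loop_decode_in_min_recurrent)
  show "loop_code G n \<in>
      borel_on (min_recurrent G n) \<rightarrow>\<^sub>M borel_on (markov_shift (return_loop_graph G n))"
    by (rule measurable_borel_on[OF measurable_loop_code]) (auto simp: loop_code_in_markov_shift)
  show "loop_decode \<in>
      borel_on (markov_shift (return_loop_graph G n)) \<rightarrow>\<^sub>M borel_on (min_recurrent G n)"
    by (rule measurable_borel_on[OF measurable_loop_decode]) (auto simp: loop_decode_in_min_recurrent)
  show "loop_decode (loop_code G n x) = x" if "x \<in> min_recurrent G n" for x
    using that by (rule loop_decode_loop_code)
  show "loop_code G n (loop_decode y) = y" if "y \<in> markov_shift (return_loop_graph G n)" for y
    using that by (rule loop_code_loop_decode)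
  show "loop_code G n (shift x) = shift (loop_code G n x)" for x
    unfolding loop_code_def
    by (auto simp: shift_eq_shift_pow shift_pow_shift_pow shift_pow_apply add_ac)
qed

theorem lemma3p6:
  fixes G :: graph
  assumes "wf_digraph G"
  shows "\<exists>(W :: (int \<Rightarrow> nat) set) (Xs :: nat \<Rightarrow> (int \<Rightarrow> nat) set) (L :: nat \<Rightarrow> graph).
     markov_shift G = W \<union> (\<Union>n. Xs n) \<and>
     (\<forall>n. W \<inter> Xs n = {}) \<and> disjoint_family Xs \<and>
     shift ` W = W \<and> weakly_wandering G W \<and>
     (\<forall>n. Xs n \<in> sets (borel_on (markov_shift G)) \<and> shift ` Xs n = Xs n) \<and>
     (\<forall>n. loop_graph (L n) \<and> borel_iso (Xs n) (markov_shift (L n)))"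
proof (intro exI[of _ "transient_part G"] exI[of _ "min_recurrent G"]
    exI[of _ "return_loop_graph G"] conjI allI)
  have min_recurrent_subset: "min_recurrent G n \<subseteq> markov_shift G" for n
    unfolding min_recurrent_def by blast
  then show "markov_shift G = transient_part G \<union> (\<Union>n. min_recurrent G n)"
    unfolding transient_part_def by blast
  show "transient_part G \<inter> min_recurrent G n = {}" for n
    unfolding transient_part_def by blast
  show "min_recurrent G n \<in> sets (borel_on (markov_shift G))" for n
    using sets_borel_min_recurrent min_recurrent_subset by (rule sets_borel_on_markov_shift)
  show "shift ` min_recurrent G n = min_recurrent G n" for n
    by (rule shift_image_eq_if_shift_pow_closed) (rule min_recurrent_shift_pow)
qed (fact disjoint_family_min_recurrent shift_image_transient_part weakly_wandering_transient_part
      loop_graph_return_loop_graph borel_iso_min_recurrent)+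

end
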